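(* Let $\mathcal{W}$ be a nonempty set and let $\mathcal{R}$ be a set of binary relations on $\mathcal{W}$ (subsets of $\mathcal{W}\times\mathcal{W}$) that is closed under composition $\circ$, where $r \circ r' = \{(w,w') : \exists w'' \in \mathcal{W},\ (w,w'') \in r \text{ and } (w'',w') \in r'\}$. Suppose $\mathcal{R}$ contains a relation $r$ of nontrivial finite order, i.e., there is an integer $n$ with $1 < n < \infty$ such that $r^n = r \circ \cdots \circ r$ ($n$ times) equals the identity relation $e = \{(w,w) : w \in \mathcal{W}\}$ and $r^k \neq e$ for $0<k<n$. Let $F$ be a field of characteristic $0$ (e.g. $\mathbb{R}$ or $\mathbb{C}$). Then there is no $F$-vector space $\mathbb{V}$ and map $\varphi : \mathcal{W} \to \mathbb{V}$ such that $(\mathcal{W}, \mathcal{R}, \mathbb{V}, \varphi)$ is a relation-as-vector representation that well-represents $\mathcal{R}$.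
   Context: Given a set of words $\mathcal{W}$, a set $\mathcal{R}$ of binary relations on $\mathcal{W}$, a vector space $\mathbb{V}$ and a map $\varphi : \mathcal{W} \to \mathbb{V}$, the tuple $(\mathcal{W}, \mathcal{R}, \mathbb{V}, \varphi)$ is called a relation-as-vector representation if for every $r \in \mathcal{R}$ and all $a,b,c,d \in \mathcal{W}$ with $(a,b) \in r$ and $(c,d) \in r$ one has $\varphi(b) - \varphi(a) = \varphi(d) - \varphi(c)$; this common vector is denoted $\varphi(r) = \varphi(b)-\varphi(a)$. The set $\mathcal{R}$ is well-represented by such a representation if $\varphi(r) \neq \varphi(r')$ for all distinct $r, r' \in \mathcal{R}$. The order of $r$ refers to its order as an element of $(\mathcal{R}, \circ)$ with identity the identity relation. *)

theory Defs
  imports Main "HOL.Vector_Spaces"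
begin

definition rel_as_vec_rep :: "('w \<times> 'w) set set \<Rightarrow> ('w \<Rightarrow> 'v::ab_group_add) \<Rightarrow> bool" where
  "rel_as_vec_rep R \<phi> \<longleftrightarrow>
     (\<forall>r\<in>R. \<forall>a b c d. (a, b) \<in> r \<longrightarrow> (c, d) \<in> r \<longrightarrow> \<phi> b - \<phi> a = \<phi> d - \<phi> c)"

definition rel_vec :: "('w \<Rightarrow> 'v::ab_group_add) \<Rightarrow> ('w \<times> 'w) set \<Rightarrow> 'v" where
  "rel_vec \<phi> r = (SOME v. \<exists>(a, b)\<in>r. v = \<phi> b - \<phi> a)"

definition well_represents :: "('w \<times> 'w) set set \<Rightarrow> ('w \<Rightarrow> 'v::ab_group_add) \<Rightarrow> bool" where
  "well_represents R \<phi> \<longleftrightarrow> (\<forall>r\<in>R. \<forall>r'\<in>R. r \<noteq> r' \<longrightarrow> rel_vec \<phi> r \<noteq> rel_vec \<phi> r')"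

end

theory Submission
  imports Defs
begin

text \<open>In a relation-as-vector representation the vector of a composite is the sum of the vectors
  of its factors. If \<open>r ^^ n\<close> is the identity, the vector \<open>v\<close> of \<open>r\<close> therefore satisfies
  \<open>n v = 0\<close>, hence \<open>v = 0\<close> in characteristic 0. But the identity relation, which lies in the
  composition-closed family as \<open>r ^^ n\<close>, is also represented by \<open>0\<close>, so \<open>r\<close> and the identity
  are distinct relations with the same vector.\<close>

lemma relpow_Suc_mem_if_comp_closed:
  assumes "\<forall>s\<in>R. \<forall>t\<in>R. s O t \<in> R" and "r \<in> R"
  shows "r ^^ Suc k \<in> R"
proof (induction k)
  case 0
  then show ?case using assms(2) by simp
next
  case (Suc k)
  then show ?case using assms by simp
qed

lemma rel_vec_eqI:
  assumes "rel_as_vec_rep R \<phi>" and "r \<in> R" and "(a, b) \<in> r"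
  shows "rel_vec \<phi> r = \<phi> b - \<phi> a"
proof -
  have "\<exists>(c, d)\<in>r. rel_vec \<phi> r = \<phi> d - \<phi> c"
    unfolding rel_vec_def by (rule someI_ex) (use assms(3) in blast)
  then obtain c d where "(c, d) \<in> r" and "rel_vec \<phi> r = \<phi> d - \<phi> c" by blast
  with assms show ?thesis unfolding rel_as_vec_rep_def by metis
qed

lemma rel_vec_Id_on:
  assumes "W \<noteq> {}"
  shows "rel_vec \<phi> (Id_on W) = 0"
proof -
  have "\<exists>(a, b)\<in>Id_on W. rel_vec \<phi> (Id_on W) = \<phi> b - \<phi> a"
    unfolding rel_vec_def by (rule someI_ex) (use assms in blast)
  then show ?thesis by (auto simp: Id_on_def)
qed

lemma relpow_diff_eq_sum:
  fixes \<phi> :: "'w \<Rightarrow> 'v::ab_group_add"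
  assumes "\<forall>a b. (a, b) \<in> r \<longrightarrow> \<phi> b - \<phi> a = v" and "(a, b) \<in> r ^^ k"
  shows "\<phi> b - \<phi> a = (\<Sum>_<k. v)"
  using assms(2)
proof (induction k arbitrary: b)
  case 0
  then show ?case by simp
next
  case (Suc k)
  then obtain c where "(a, c) \<in> r ^^ k" and "(c, b) \<in> r" by (meson relpow_Suc_E)
  then have "\<phi> c - \<phi> a = (\<Sum>_<k. v)" and "\<phi> b - \<phi> c = v" using Suc.IH assms(1) by auto
  then show ?case by (simp add: algebra_simps)
qed

lemma sum_const_eq_0_imp_eq_0_char_0:
  fixes scale :: "'f::field_char_0 \<Rightarrow> 'v::ab_group_add \<Rightarrow> 'v" and n :: nat and v :: 'v
  assumes "vector_space scale" and "(\<Sum>_<n. v) = 0" and "0 < n"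
  shows "v = 0"
proof -
  interpret vector_space scale by (fact assms(1))
  have "scale (of_nat n) v = scale (\<Sum>_<n. 1) v" by simp
  also have "\<dots> = (\<Sum>_<n. v)" by (simp only: scale_sum_left scale_one)
  finally show ?thesis using assms(2,3) by simp
qed

lemma rel_vec_eq_0_if_relpow_refl:
  fixes scale :: "'f::field_char_0 \<Rightarrow> 'v::ab_group_add \<Rightarrow> 'v" and \<phi> :: "'w \<Rightarrow> 'v" and n :: nat
  assumes "vector_space scale" and "rel_as_vec_rep R \<phi>" and "r \<in> R"
    and "(w, w) \<in> r ^^ n" and "0 < n"
  shows "rel_vec \<phi> r = 0"
proof -
  have "\<forall>a b. (a, b) \<in> r \<longrightarrow> \<phi> b - \<phi> a = rel_vec \<phi> r"
    using rel_vec_eqI[OF assms(2,3)] by simp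
  then have "(\<Sum>_<n. rel_vec \<phi> r) = 0"
    using relpow_diff_eq_sum[OF _ assms(4)] by simp
  then show ?thesis using sum_const_eq_0_imp_eq_0_char_0[OF assms(1)] assms(5) by blast
qed

theorem theorem1:
  fixes W :: "'w set" and R :: "('w \<times> 'w) set set" and r :: "('w \<times> 'w) set" and n :: nat
  assumes "W \<noteq> {}"
    and "\<forall>s\<in>R. s \<subseteq> W \<times> W"
    and "\<forall>s\<in>R. \<forall>t\<in>R. s O t \<in> R"
    and "r \<in> R"
    and "1 < n"
    and "r ^^ n = Id_on W"
    and "\<forall>k. 0 < k \<and> k < n \<longrightarrow> r ^^ k \<noteq> Id_on W"
  shows "\<not> (\<exists>(scale :: 'f::field_char_0 \<Rightarrow> 'v::ab_group_add \<Rightarrow> 'v) (\<phi> :: 'w \<Rightarrow> 'v).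
            vector_space scale \<and> rel_as_vec_rep R \<phi> \<and> well_represents R \<phi>)"
proof clarify
  fix scale :: "'f \<Rightarrow> 'v \<Rightarrow> 'v" and \<phi> :: "'w \<Rightarrow> 'v"
  assume vs: "vector_space scale" and rep: "rel_as_vec_rep R \<phi>" and wr: "well_represents R \<phi>"
  obtain w where "w \<in> W" using assms(1) by blast
  have Id_in_R: "Id_on W \<in> R"
    using relpow_Suc_mem_if_comp_closed[OF assms(3,4), of "n - 1"] assms(5,6) by simp
  have r_ne_Id: "r \<noteq> Id_on W" using assms(5,7) by force
  have "(w, w) \<in> r ^^ n" using \<open>w \<in> W\<close> assms(6) by auto
  then have "rel_vec \<phi> r = 0"
    using rel_vec_eq_0_if_relpow_refl[OF vs rep assms(4)] assms(5) by simp
  moreover have "rel_vec \<phi> (Id_on W) = 0" by (rule rel_vec_Id_on[OF assms(1)])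
  ultimately show False
    using wr Id_in_R assms(4) r_ne_Id unfolding well_represents_def by metis
qed

end
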